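(* Assume the zero-derivation setting $\delta=0$ and write $\mathbb{F}_{q^m}[x;\theta]$ for the skew polynomial ring. Let $s\ge1$, $\boldsymbol\xi=(\xi_1,\dots,\xi_\ell)$ representatives of pairwise distinct nontrivial conjugacy classes, $\mathbf n$ a length partition of $n$, $\boldsymbol\beta_1,\dots,\boldsymbol\beta_s\in\mathbb{F}_{q^m}^n$ with each block having $\mathbb{F}_q$-linearly independent entries, and $\mathbf c$ a codeword of the corresponding HILRS code of interleaving order $s$ and dimension $sk$ with message-polynomial vector $(f_1,\dots,f_s)$. Let $\mathbf y=\mathbf c+\mathbf e$ with $\mathrm{wt}_{\Sigma R}(\mathbf e)=t\le\frac{s}{s+1}(n-k)$, let $\sigma$ be the error-span polynomial of $\mathbf e$, and let $G_j,R_j$ ($j=1,\dots,s$) be the minimal and interpolation polynomials defined in the context. Let $\chi_1,\dots,\chi_s\in\mathbb{F}_{q^m}[x;\theta]$ be the skew polynomials with $\sigma f_j=\chi_jG_j+\sigma R_j$ for all $j$. Put $$\mathbf W=\begin{pmatrix}-\mathbf I_s\\ \mathbf R\\ \mathbf G\end{pmatrix}\in\mathbb{F}_{q^m}[x;\theta]^{(2s+1)\times s},\quad \mathbf R=(R_1,\dots,R_s),\ \mathbf G=\mathrm{diag}(G_1,\dots,G_s),$$ $\boldsymbol\rho=(\sigma f_1,\dots,\sigma f_s,\sigma)$, $\boldsymbol\chi=(\chi_1,\dots,\chi_s)$, $\mathbf w=(0,\dots,0,k-1)\in\mathbb Z^{s+1}$, $\mathbf v=(0,\dots,0,k-1,0,\dots,0)\in\mathbb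 Z^{2s+1}$ (the entry $k-1$ in position $s+1$), $D=\frac{s}{s+1}(n-k)$ and $d=D+n$. Then $$(\boldsymbol\rho\mid\boldsymbol\chi)\mathbf W=\mathbf 0\ \text{ and }\ \mathrm{rdeg}_{\mathbf w}(\boldsymbol\rho)<D$$ if and only if $$(\boldsymbol\rho\mid\boldsymbol\chi)\mathbf W\equiv\mathbf 0\bmod_r x^d\ \text{ and }\ \mathrm{rdeg}_{\mathbf v}(\boldsymbol\rho\mid\boldsymbol\chi)<D.$$
   Context: $q$ a prime power, $m\ge1$, $\theta$ an automorphism of $\mathbb{F}_{q^m}$ with fixed field $\mathbb{F}_q$. $\mathbb{F}_{q^m}[x;\theta]$: skew polynomials $\sum_if_ix^{i-1}$ with multiplication rule $xa=\theta(a)x$. Elements $a,b$ are conjugate if $b=\theta(c)ac^{-1}$ for some $c\ne0$; the class of $0$ is trivial. Generalized operator evaluation: $\mathcal D_a(b)=\theta(b)a$, $\mathcal D_a^0(b)=b$, $\mathcal D_a^i=\mathcal D_a\circ\mathcal D_a^{i-1}$, $f(b)_a=\sum_if_i\mathcal D_a^{i-1}(b)$; a length partition $\mathbf n=(n_1,\dots,n_\ell)$ of $n$ splits vectors into blocks $\mathbf x^{(i)}\in\mathbb{F}_{q^m}^{n_i}$, and $f(\mathbf x)_{\mathbf a}=(f(\mathbf x^{(1)})_{a_1}\mid\dots\mid f(\mathbf x^{(\ell)})_{a_\ell})$ entrywise. HILRS code: all $(\mathbf c_1\mid\dots\mid\mathbf c_s)\in\mathbb{F}_{q^m}^{sn}$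 with $\mathbf c_j=f_j(\boldsymbol\beta_j)_{\boldsymbol\xi}$ for some $f_j$ of degree $<k$; $(f_1,\dots,f_s)$ is the message-polynomial vector. Sum-rank weight of $\mathbf x=(\mathbf x_1\mid\dots\mid\mathbf x_s)$: $\sum_i\mathrm{rk}_q(\mathbf x_1^{(i)}\mid\dots\mid\mathbf x_s^{(i)})$ ($\mathrm{rk}_q$ = max number of $\mathbb{F}_q$-linearly independent entries). Error values: with $t_i=\mathrm{rk}_q(\mathbf e_1^{(i)}\mid\dots\mid\mathbf e_s^{(i)})$, choose $\mathbf a^{(i)}\in\mathbb{F}_{q^m}^{t_i}$ with $\mathbb{F}_q$-linearly independent entries and $\mathbf B_j^{(i)}\in\mathbb{F}_q^{t_i\times n_i}$ with $\mathbf e_j^{(i)}=\mathbf a^{(i)}\mathbf B_j^{(i)}$ and $\mathrm{rk}(\mathbf B_1^{(i)}\mid\dots\mid\mathbf B_s^{(i)})=t_i$; the error-span polynomial $\sigma$ is the monic nonzero skew polynomial of least degree with $\sigma(\mathbf a^{(i)})_{\xi_i}=\mathbf 0$ for all $i$. $G_j$ is the monic nonzero skew polynomial of least degree with $G_j(\boldsymbol\beta_j)_{\boldsymbol\xi}=\mathbf 0$; $R_j$ is the unique skew polynomial of degree $<n$ with $R_j(\boldsymbol\beta_j)_{\boldsymbol\xi}=\mathbf y_j$. For a shift $\mathbf v\in\mathbb Z^a$ and $\mathbf b\in\mathbb{F}_{q^m}[x;\theta]^a$, the $\mathbf v$-shifted row degree is $\mathrm{rdeg}_{\mathbf v}(\mathbf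 b)=\max_j(\deg b_j+v_j)$ (with $\deg 0=-\infty$). For a vector, $\equiv\mathbf 0\bmod_r x^d$ means every entry has remainder $0$ upon right division by $x^d$. *)

theory Defs
  imports "HOL-Computational_Algebra.Polynomial" "HOL-Library.Extended_Real"
begin

(* Field automorphism theta of F_{q^m}; F_q is its fixed field {a. theta a = a}. *)
definition field_aut :: "('a::field \<Rightarrow> 'a) \<Rightarrow> bool" where
  "field_aut \<theta> \<longleftrightarrow> bij \<theta> \<and> (\<forall>a b. \<theta> (a + b) = \<theta> a + \<theta> b) \<and> (\<forall>a b. \<theta> (a * b) = \<theta> a * \<theta> b)"

(* Skew polynomials F_{q^m}[x;theta] (derivation delta = 0): carried by 'a poly
   (coefficient representation), with the skew product  x a = theta(a) x. *)
definition skew_mult :: "('a::field \<Rightarrow> 'a) \<Rightarrow> 'a poly \<Rightarrow> 'a poly \<Rightarrow> 'a poly" where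
  "skew_mult \<theta> p q = (\<Sum>i\<le>degree p. \<Sum>j\<le>degree q.
      monom (coeff p i * (\<theta> ^^ i) (coeff q j)) (i + j))"

definition conjugate :: "('a::field \<Rightarrow> 'a) \<Rightarrow> 'a \<Rightarrow> 'a \<Rightarrow> bool" where
  "conjugate \<theta> a b \<longleftrightarrow> (\<exists>c. c \<noteq> 0 \<and> b = \<theta> c * a * inverse c)"

definition op_eval :: "('a::field \<Rightarrow> 'a) \<Rightarrow> 'a poly \<Rightarrow> 'a \<Rightarrow> 'a \<Rightarrow> 'a" where
  "op_eval \<theta> f a b = (\<Sum>i\<le>degree f. coeff f i * ((\<lambda>c. \<theta> c * a) ^^ i) b)"

definition Fq_indep :: "('a::field \<Rightarrow> 'a) \<Rightarrow> ('i \<Rightarrow> 'a) \<Rightarrow> 'i set \<Rightarrow> bool" where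
  "Fq_indep \<theta> v J \<longleftrightarrow> (\<forall>c. (\<forall>x\<in>J. \<theta> (c x) = c x) \<longrightarrow> (\<Sum>x\<in>J. c x * v x) = 0 \<longrightarrow> (\<forall>x\<in>J. c x = 0))"

definition Fq_indep_vec :: "('a::field \<Rightarrow> 'a) \<Rightarrow> ('i \<Rightarrow> 'k \<Rightarrow> 'a) \<Rightarrow> 'i set \<Rightarrow> 'k set \<Rightarrow> bool" where
  "Fq_indep_vec \<theta> v J K \<longleftrightarrow> (\<forall>c. (\<forall>x\<in>J. \<theta> (c x) = c x) \<longrightarrow>
      (\<forall>k\<in>K. (\<Sum>x\<in>J. c x * v x k) = 0) \<longrightarrow> (\<forall>x\<in>J. c x = 0))"

definition rkq :: "('a::field \<Rightarrow> 'a) \<Rightarrow> ('i \<Rightarrow> 'a) \<Rightarrow> 'i set \<Rightarrow> nat" where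
  "rkq \<theta> v I = Max {card J | J. J \<subseteq> I \<and> Fq_indep \<theta> v J}"

definition mat_rank_Fq :: "('a::field \<Rightarrow> 'a) \<Rightarrow> (nat \<Rightarrow> 'k \<Rightarrow> 'a) \<Rightarrow> nat \<Rightarrow> 'k set \<Rightarrow> nat" where
  "mat_rank_Fq \<theta> M rows K = Max {card J | J. J \<subseteq> {..<rows} \<and> Fq_indep_vec \<theta> M J K}"

(* Vectors (x_1|...|x_s) in F^{sn} are represented as x j i p = p-th entry of block i of x_j,
   (j < s, i < l, p < nn i).  rk_q of the i-th block (x_1^(i)|...|x_s^(i)): *)
definition block_rank :: "('a::field \<Rightarrow> 'a) \<Rightarrow> nat \<Rightarrow> (nat \<Rightarrow> nat) \<Rightarrow> (nat \<Rightarrow> nat \<Rightarrow> nat \<Rightarrow> 'a) \<Rightarrow> nat \<Rightarrow> nat" where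
  "block_rank \<theta> s nn x i = rkq \<theta> (\<lambda>(j, p). x j i p) ({..<s} \<times> {..<nn i})"

definition sumrank_wt :: "('a::field \<Rightarrow> 'a) \<Rightarrow> nat \<Rightarrow> nat \<Rightarrow> (nat \<Rightarrow> nat) \<Rightarrow> (nat \<Rightarrow> nat \<Rightarrow> nat \<Rightarrow> 'a) \<Rightarrow> nat" where
  "sumrank_wt \<theta> s l nn x = (\<Sum>i<l. block_rank \<theta> s nn x i)"

definition rdeg :: "int list \<Rightarrow> 'a::zero poly list \<Rightarrow> ereal" where
  "rdeg v b = (MAX j\<in>{..<length b}.
      (if b ! j = 0 then -\<infinity> else ereal (of_int (int (degree (b ! j)) + v ! j))))"

definition vec_mat :: "('a::field \<Rightarrow> 'a) \<Rightarrow> 'a poly list \<Rightarrow> (nat \<Rightarrow> nat \<Rightarrow> 'a poly) \<Rightarrow> nat \<Rightarrow> 'a poly list" where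
  "vec_mat \<theta> r W cols = map (\<lambda>j. \<Sum>i<length r. skew_mult \<theta> (r ! i) (W i j)) [0..<cols]"

definition mod_r_zero :: "('a::field \<Rightarrow> 'a) \<Rightarrow> 'a poly \<Rightarrow> nat \<Rightarrow> bool" where
  "mod_r_zero \<theta> p N \<longleftrightarrow> (\<exists>g. p = skew_mult \<theta> g (monom 1 N))"

definition Wmat :: "nat \<Rightarrow> (nat \<Rightarrow> 'a::comm_ring_1 poly) \<Rightarrow> (nat \<Rightarrow> 'a poly) \<Rightarrow> nat \<Rightarrow> nat \<Rightarrow> 'a poly" where
  "Wmat s R G i j =
     (if i < s then (if i = j then -1 else 0)
      else if i = s then R j
      else (if i - s - 1 = j then G j else 0))"

end

theory Submission
  imports Defs
begin

(* Since \<chi>\<^sub>j is defined by \<sigma> f\<^sub>j = \<chi>\<^sub>j G\<^sub>j + \<sigma> R\<^sub>j, the product (\<rho> | \<chi>) W vanishes identically, so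
   both sides of the equivalence reduce to degree conditions, and the v-shifted degree only adds
   the entries \<chi>\<^sub>j to the w-shifted one.  These are harmless: \<chi>\<^sub>j G\<^sub>j = \<sigma> (f\<^sub>j - R\<^sub>j) with
   deg (f\<^sub>j - R\<^sub>j) < max k n and deg G\<^sub>j \<ge> n, so deg \<chi>\<^sub>j \<le> deg \<sigma> + k - 1 < D.

   The bound deg G\<^sub>j \<ge> n is the skew analogue of "a nonzero polynomial has at most deg many
   roots": a nonzero g annihilating F\<^sub>q-independent elements b at nontrivial, pairwise
   non-conjugate evaluation points has at least as large a degree as there are such elements.
   For one root b at the point a, g has the right factor x - \<theta>(b) a b\<^sup>-\<^sup>1; evaluation of this
   factor sends the other roots to roots of the quotient, and it keeps them F\<^sub>q-independent
   because its kernel is F\<^sub>q b at the point a and trivial at points not conjugate to a. *)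

lemma pCons_0_add: "pCons 0 (p + q) = pCons 0 p + pCons (0::'a::comm_monoid_add) q"
  by simp

lemma pCons_0_sum: "pCons 0 (\<Sum>x\<in>A. f x) = (\<Sum>x\<in>A. pCons (0::'a::comm_monoid_add) (f x))"
  by (induction A rule: infinite_finite_induct) (simp_all add: pCons_0_add)

lemma degree_less_if_coeff_0:
  assumes "degree p \<le> n" "coeff p n = 0" "p \<noteq> 0"
  shows "degree p < n"
  using assms leading_coeff_0_iff le_neq_implies_less by metis

lemma op_eval_eq_sum:
  assumes "degree f \<le> N"
  shows "op_eval \<theta> f a b = (\<Sum>i\<le>N. coeff f i * ((\<lambda>c. \<theta> c * a) ^^ i) b)"
  unfolding op_eval_def
  by (rule sum.mono_neutral_left) (use assms in \<open>auto simp: coeff_eq_0\<close>)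

lemma op_eval_0 [simp]: "op_eval \<theta> 0 a b = 0"
  by (simp add: op_eval_def)

lemma op_eval_pCons: "op_eval \<theta> (pCons c p) a b = c * b + op_eval \<theta> p a (\<theta> b * a)"
proof -
  have "op_eval \<theta> (pCons c p) a b
      = (\<Sum>i\<le>Suc (degree p). coeff (pCons c p) i * ((\<lambda>c. \<theta> c * a) ^^ i) b)"
    by (rule op_eval_eq_sum) (simp add: degree_pCons_le)
  also have "\<dots> = c * b + (\<Sum>i\<le>degree p. coeff p i * ((\<lambda>c. \<theta> c * a) ^^ i) (\<theta> b * a))"
    by (subst sum.atMost_Suc_shift) (simp add: funpow_Suc_right del: funpow.simps)
  finally show ?thesis by (simp add: op_eval_def)
qed

lemma op_eval_const: "op_eval \<theta> [:r:] a b = r * b"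
  by (simp add: op_eval_pCons)

lemma op_eval_linear: "op_eval \<theta> [:- c, 1:] a b = \<theta> b * a - c * b"
  by (simp add: op_eval_pCons)

lemma op_eval_add: "op_eval \<theta> (f + g) a b = op_eval \<theta> f a b + op_eval \<theta> g a b"
  by (induction f g arbitrary: b rule: poly_induct2) (simp_all add: op_eval_pCons algebra_simps)

lemma op_eval_smult: "op_eval \<theta> (smult r f) a b = r * op_eval \<theta> f a b"
  by (induction f arbitrary: b) (simp_all add: op_eval_pCons algebra_simps)

locale field_automorphism =
  fixes \<theta> :: "'a::field \<Rightarrow> 'a"
  assumes field_aut: "field_aut \<theta>"
begin

lemma hom_add: "\<theta> (x + y) = \<theta> x + \<theta> y"
  using field_aut by (simp add: field_aut_def)

lemma hom_mult: "\<theta> (x * y) = \<theta> x * \<theta> y"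
  using field_aut by (simp add: field_aut_def)

lemma hom_0 [simp]: "\<theta> 0 = 0"
  using hom_add[of 0 0] by (metis add.right_neutral add_left_cancel)

lemma hom_eq_0_iff [simp]: "\<theta> x = 0 \<longleftrightarrow> x = 0"
  using field_aut hom_0 unfolding field_aut_def bij_def by (metis injD)

lemma hom_1 [simp]: "\<theta> 1 = 1"
  using hom_mult[of 1 1] by simp

lemma hom_uminus: "\<theta> (- x) = - \<theta> x"
  using hom_add[of x "- x"] by (metis add.right_inverse hom_0 minus_unique)

lemma hom_inverse: "\<theta> (inverse x) = inverse (\<theta> x)"
proof (cases "x = 0")
  case False
  then have "\<theta> x * \<theta> (inverse x) = 1" by (simp flip: hom_mult)
  then show ?thesis by (simp add: inverse_unique)
qed simp

lemma hom_divide: "\<theta> (x / y) = \<theta> x / \<theta> y"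
  by (simp add: divide_inverse hom_mult hom_inverse)

lemma automorphism_funpow: "field_automorphism (\<theta> ^^ i)"
proof
  have "bij \<theta>" using field_aut by (simp add: field_aut_def)
  then show "field_aut (\<theta> ^^ i)"
    unfolding field_aut_def by (induction i) (simp_all add: bij_comp hom_add hom_mult)
qed

lemma hom_funpow_0 [simp]: "(\<theta> ^^ i) 0 = 0"
  and hom_funpow_1 [simp]: "(\<theta> ^^ i) 1 = 1"
  and hom_funpow_eq_0_iff [simp]: "(\<theta> ^^ i) x = 0 \<longleftrightarrow> x = 0"
  by (simp_all add: field_automorphism.hom_0[OF automorphism_funpow]
      field_automorphism.hom_1[OF automorphism_funpow]
      field_automorphism.hom_eq_0_iff[OF automorphism_funpow] del: funpow.simps)

lemma degree_map_poly_funpow [simp]: "degree (map_poly (\<theta> ^^ i) p) = degree p"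
  by (rule degree_map_poly) (simp del: funpow.simps)

lemma degree_map_poly_hom [simp]: "degree (map_poly \<theta> p) = degree p"
  using degree_map_poly_funpow[of 1] by simp

lemma map_poly_funpow_Suc: "map_poly (\<theta> ^^ Suc i) q = map_poly (\<theta> ^^ i) (map_poly \<theta> q)"
  by (simp add: map_poly_map_poly funpow_Suc_right del: funpow.simps)

lemma skew_mult_eq_sum:
  assumes "degree p \<le> N"
  shows "skew_mult \<theta> p q = (\<Sum>i\<le>N. monom (coeff p i) i * map_poly (\<theta> ^^ i) q)"
proof -
  have row: "(\<Sum>j\<le>degree q. monom (coeff p i * (\<theta> ^^ i) (coeff q j)) (i + j))
      = monom (coeff p i) i * map_poly (\<theta> ^^ i) q" for i
  proof -
    have "map_poly (\<theta> ^^ i) q = (\<Sum>j\<le>degree q. monom ((\<theta> ^^ i) (coeff q j)) j)"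
      using poly_as_sum_of_monoms'[of "map_poly (\<theta> ^^ i) q" "degree q"]
      by (simp add: coeff_map_poly del: funpow.simps)
    then show ?thesis by (simp add: sum_distrib_left mult_monom del: funpow.simps)
  qed
  have "skew_mult \<theta> p q = (\<Sum>i\<le>degree p. monom (coeff p i) i * map_poly (\<theta> ^^ i) q)"
    by (simp add: skew_mult_def row del: funpow.simps)
  also have "\<dots> = (\<Sum>i\<le>N. monom (coeff p i) i * map_poly (\<theta> ^^ i) q)"
    by (rule sum.mono_neutral_left) (use assms in \<open>auto simp: coeff_eq_0\<close>)
  finally show ?thesis .
qed

lemma skew_mult_0_left [simp]: "skew_mult \<theta> 0 q = 0"
  by (simp add: skew_mult_def)

(* pCons 0 p is p x, so this is the rule (c + p x) q = c q + p \<theta>(q) x. *)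
lemma skew_mult_pCons_left:
  "skew_mult \<theta> (pCons c p) q = smult c q + pCons 0 (skew_mult \<theta> p (map_poly \<theta> q))"
proof -
  have "skew_mult \<theta> (pCons c p) q
      = (\<Sum>i\<le>Suc (degree p). monom (coeff (pCons c p) i) i * map_poly (\<theta> ^^ i) q)"
    by (rule skew_mult_eq_sum) (simp add: degree_pCons_le)
  also have "\<dots> = smult c q + (\<Sum>i\<le>degree p. monom (coeff p i) (Suc i) * map_poly (\<theta> ^^ Suc i) q)"
    by (subst sum.atMost_Suc_shift) (simp add: monom_0 del: funpow.simps(2))
  also have "(\<Sum>i\<le>degree p. monom (coeff p i) (Suc i) * map_poly (\<theta> ^^ Suc i) q)
      = pCons 0 (\<Sum>i\<le>degree p. monom (coeff p i) i * map_poly (\<theta> ^^ i) (map_poly \<theta> q))"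
    by (simp add: monom_Suc map_poly_funpow_Suc pCons_0_sum del: funpow.simps)
  also have "(\<Sum>i\<le>degree p. monom (coeff p i) i * map_poly (\<theta> ^^ i) (map_poly \<theta> q))
      = skew_mult \<theta> p (map_poly \<theta> q)"
    by (rule skew_mult_eq_sum[symmetric]) simp
  finally show ?thesis .
qed

lemma skew_mult_0_right [simp]: "skew_mult \<theta> p 0 = 0"
  by (induction p) (simp_all add: skew_mult_pCons_left)

lemma skew_mult_1_right [simp]: "skew_mult \<theta> p 1 = p"
  by (induction p) (simp_all add: skew_mult_pCons_left)

lemma skew_mult_add_left: "skew_mult \<theta> (p + p') q = skew_mult \<theta> p q + skew_mult \<theta> p' q"
proof (induction p p' arbitrary: q rule: poly_induct2)
  case (pCons a p b p')
  then show ?case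
    by (simp only: add_pCons skew_mult_pCons_left)
      (simp add: smult_add_left pCons_0_add algebra_simps del: add_pCons)
qed simp

lemma map_poly_hom_add: "map_poly \<theta> (q + q') = map_poly \<theta> q + map_poly \<theta> q'"
  by (rule poly_eqI) (simp add: coeff_map_poly hom_add)

lemma map_poly_hom_uminus: "map_poly \<theta> (- q) = - map_poly \<theta> q"
  by (rule poly_eqI) (simp add: coeff_map_poly hom_uminus)

lemma skew_mult_add_right: "skew_mult \<theta> p (q + q') = skew_mult \<theta> p q + skew_mult \<theta> p q'"
  by (induction p arbitrary: q q')
    (simp_all add: skew_mult_pCons_left map_poly_hom_add smult_add_right pCons_0_add algebra_simps del: add_pCons)

lemma skew_mult_uminus_right: "skew_mult \<theta> p (- q) = - skew_mult \<theta> p q"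
  by (induction p arbitrary: q) (simp_all add: skew_mult_pCons_left map_poly_hom_uminus)

lemma skew_mult_diff_right: "skew_mult \<theta> p (q - q') = skew_mult \<theta> p q - skew_mult \<theta> p q'"
  using skew_mult_add_right[of p q "- q'"] by (simp add: skew_mult_uminus_right)

lemma degree_skew_mult_le: "degree (skew_mult \<theta> p q) \<le> degree p + degree q"
proof (induction p arbitrary: q)
  case (pCons c p)
  have "degree (pCons 0 (skew_mult \<theta> p (map_poly \<theta> q))) \<le> degree (pCons c p) + degree q"
    using pCons.IH[of "map_poly \<theta> q"] by (cases "p = 0") auto
  then show ?case
    by (simp add: skew_mult_pCons_left degree_add_le le_trans[OF degree_smult_le])
qed simp

lemma coeff_skew_mult_degree:
  "coeff (skew_mult \<theta> p q) (degree p + degree q) = lead_coeff p * (\<theta> ^^ degree p) (lead_coeff q)"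
proof (induction p arbitrary: q)
  case (pCons c p)
  show ?case
  proof (cases "p = 0")
    case False
    have "coeff q (Suc (degree p + degree q)) = 0"
      by (simp add: coeff_eq_0)
    then show ?thesis
      using False pCons.IH[of "map_poly \<theta> q"]
      by (simp add: skew_mult_pCons_left coeff_map_poly funpow_Suc_right del: funpow.simps)
  qed (simp add: skew_mult_pCons_left)
qed simp

lemma degree_skew_mult:
  assumes "p \<noteq> 0" "q \<noteq> 0"
  shows "degree (skew_mult \<theta> p q) = degree p + degree q"
  using assms coeff_skew_mult_degree[of p q] degree_skew_mult_le[of p q]
  by (metis antisym le_degree leading_coeff_0_iff mult_eq_0_iff hom_funpow_eq_0_iff)

lemma lead_coeff_skew_mult:
  assumes "p \<noteq> 0" "q \<noteq> 0"
  shows "lead_coeff (skew_mult \<theta> p q) = lead_coeff p * (\<theta> ^^ degree p) (lead_coeff q)"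
  using assms by (simp add: degree_skew_mult coeff_skew_mult_degree del: funpow.simps)

lemma skew_mult_eq_0_iff [simp]: "skew_mult \<theta> p q = 0 \<longleftrightarrow> p = 0 \<or> q = 0"
proof
  assume "skew_mult \<theta> p q = 0"
  then show "p = 0 \<or> q = 0"
    using lead_coeff_skew_mult[of p q] by (metis hom_funpow_eq_0_iff leading_coeff_0_iff mult_eq_0_iff)
qed auto

lemma op_eval_0_right [simp]: "op_eval \<theta> f a 0 = 0"
  by (induction f) (simp_all add: op_eval_pCons)

lemma op_eval_map_poly: "op_eval \<theta> (map_poly \<theta> q) a (\<theta> b * a) = \<theta> (op_eval \<theta> q a b) * a"
proof (induction q arbitrary: b)
  case (pCons c q)
  show ?case
    using pCons.IH[of "\<theta> b * a", unfolded hom_mult]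
    by (simp add: map_poly_pCons op_eval_pCons hom_add hom_mult distrib_right)
qed simp

lemma op_eval_skew_mult:
  "op_eval \<theta> (skew_mult \<theta> p q) a b = op_eval \<theta> p a (op_eval \<theta> q a b)"
  by (induction p arbitrary: q b)
    (simp_all add: skew_mult_pCons_left op_eval_add op_eval_smult op_eval_pCons op_eval_map_poly)

lemma op_eval_add_right: "op_eval \<theta> f a (b + b') = op_eval \<theta> f a b + op_eval \<theta> f a b'"
  by (induction f arbitrary: b b') (simp_all add: op_eval_pCons hom_add algebra_simps)

lemma op_eval_scale_right:
  assumes "\<theta> r = r"
  shows "op_eval \<theta> f a (r * b) = r * op_eval \<theta> f a b"
proof (induction f arbitrary: b)
  case (pCons c f)
  have "\<theta> (r * b) * a = r * (\<theta> b * a)"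
    using assms by (simp add: hom_mult mult.assoc)
  then have "op_eval \<theta> (pCons c f) a (r * b) = c * (r * b) + r * op_eval \<theta> f a (\<theta> b * a)"
    by (simp only: op_eval_pCons pCons.IH)
  then show ?case
    by (simp add: op_eval_pCons algebra_simps)
qed simp

lemma op_eval_sum_right:
  assumes "\<forall>x\<in>A. \<theta> (r x) = r x"
  shows "op_eval \<theta> f a (\<Sum>x\<in>A. r x * b x) = (\<Sum>x\<in>A. r x * op_eval \<theta> f a (b x))"
  using assms
  by (induction A rule: infinite_finite_induct) (simp_all add: op_eval_add_right op_eval_scale_right)

lemma skew_right_division:
  assumes "lead_coeff d = 1"
  shows "\<exists>h r. g = skew_mult \<theta> h d + r \<and> (r = 0 \<or> degree r < degree d)"
proof (induction "degree g" arbitrary: g rule: less_induct)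
  case less
  show ?case
  proof (cases "g \<noteq> 0 \<and> degree d \<le> degree g")
    case False
    then have "g = skew_mult \<theta> 0 d + g \<and> (g = 0 \<or> degree g < degree d)" by auto
    then show ?thesis by blast
  next
    case True
    define M where "M = monom (lead_coeff g) (degree g - degree d)"
    have "d \<noteq> 0" "M \<noteq> 0" using assms True by (auto simp: M_def)
    then have deg: "degree (skew_mult \<theta> M d) = degree g"
      and lead: "lead_coeff (skew_mult \<theta> M d) = lead_coeff g"
      using True assms lead_coeff_skew_mult[of M d]
      by (simp_all add: degree_skew_mult M_def degree_monom_eq del: funpow.simps)
    define g' where "g' = g - skew_mult \<theta> M d"
    have "degree g' \<le> degree g" "coeff g' (degree g) = 0"
      using deg lead by (simp_all add: g'_def degree_diff_le)
    then have "g' = 0 \<or> degree g' < degree g"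
      using degree_less_if_coeff_0 by blast
    then obtain h r where "g' = skew_mult \<theta> h d + r" "r = 0 \<or> degree r < degree d"
      using less.hyps[of g'] by (metis add.right_neutral skew_mult_0_left)
    then have "g = skew_mult \<theta> (h + M) d + r \<and> (r = 0 \<or> degree r < degree d)"
      by (simp add: g'_def skew_mult_add_left algebra_simps)
    then show ?thesis by blast
  qed
qed

lemma skew_factor_linear:
  assumes "op_eval \<theta> g a b = 0" "b \<noteq> 0"
  obtains h where "g = skew_mult \<theta> h [:- (\<theta> b * a / b), 1:]"
proof -
  let ?X = "[:- (\<theta> b * a / b), 1:]"
  obtain h r where g: "g = skew_mult \<theta> h ?X + r" and "r = 0 \<or> degree r < 1"
    using skew_right_division[of ?X g] by auto
  then have "degree r = 0" by auto
  then have r: "r = [:coeff r 0:]" by (rule degree_0_id[symmetric])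
  have "op_eval \<theta> ?X a b = 0"
    using \<open>b \<noteq> 0\<close> by (simp add: op_eval_linear)
  then have "op_eval \<theta> g a b = op_eval \<theta> r a b"
    unfolding g by (simp add: op_eval_add op_eval_skew_mult)
  also have "\<dots> = coeff r 0 * b"
    by (subst r) (simp add: op_eval_const)
  finally have "coeff r 0 = 0"
    using assms by simp
  then have "r = 0"
    using r by simp
  with g show thesis by (auto intro: that)
qed

(* Over an infinite J every sum is 0, so the constant coefficient family 1 is a nontrivial relation. *)
lemma Fq_indep_imp_finite:
  assumes "Fq_indep \<theta> v J"
  shows "finite J"
proof (rule ccontr)
  assume "infinite J"
  then have "\<forall>x\<in>J. (1::'a) = 0"
    using assms unfolding Fq_indep_def by (auto dest: spec[of _ "\<lambda>_. 1"])
  with \<open>infinite J\<close> show False by auto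
qed

lemma Fq_indep_nonzero:
  assumes "Fq_indep \<theta> v J" "x \<in> J"
  shows "v x \<noteq> 0"
proof
  assume "v x = 0"
  define c where "c y = (if y = x then 1 else (0::'a))" for y
  have "(\<Sum>y\<in>J. c y * v y) = 0"
    using \<open>v x = 0\<close> by (intro sum.neutral) (simp add: c_def)
  moreover have "\<forall>y\<in>J. \<theta> (c y) = c y" by (simp add: c_def)
  ultimately have "c x = 0"
    using assms unfolding Fq_indep_def by blast
  then show False by (simp add: c_def)
qed

lemma Fq_indep_op_eval_inj:
  assumes "Fq_indep \<theta> w J" "\<And>z. op_eval \<theta> f a z = 0 \<Longrightarrow> z = 0"
  shows "Fq_indep \<theta> (\<lambda>x. op_eval \<theta> f a (w x)) J"
  unfolding Fq_indep_def
proof (intro allI impI)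
  fix c assume fixed: "\<forall>x\<in>J. \<theta> (c x) = c x"
    and "(\<Sum>x\<in>J. c x * op_eval \<theta> f a (w x)) = 0"
  then have "(\<Sum>x\<in>J. c x * w x) = 0"
    using assms(2) by (simp flip: op_eval_sum_right)
  then show "\<forall>x\<in>J. c x = 0"
    using assms(1) fixed unfolding Fq_indep_def by blast
qed

lemma Fq_indep_op_eval_kernel:
  assumes "Fq_indep \<theta> w J" "x0 \<in> J"
    and "\<And>z. op_eval \<theta> f a z = 0 \<Longrightarrow> \<exists>\<mu>. \<theta> \<mu> = \<mu> \<and> z = \<mu> * w x0"
  shows "Fq_indep \<theta> (\<lambda>x. op_eval \<theta> f a (w x)) (J - {x0})"
  unfolding Fq_indep_def
proof (intro allI impI)
  fix c assume fixed: "\<forall>x\<in>J - {x0}. \<theta> (c x) = c x"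
    and "(\<Sum>x\<in>J - {x0}. c x * op_eval \<theta> f a (w x)) = 0"
  then have "op_eval \<theta> f a (\<Sum>x\<in>J - {x0}. c x * w x) = 0"
    by (simp add: op_eval_sum_right)
  then obtain \<mu> where \<mu>: "\<theta> \<mu> = \<mu>" "(\<Sum>x\<in>J - {x0}. c x * w x) = \<mu> * w x0"
    using assms(3) by blast
  define c' where "c' = c(x0 := - \<mu>)"
  have "finite J" using assms(1) by (rule Fq_indep_imp_finite)
  then have "(\<Sum>x\<in>J. c' x * w x) = - \<mu> * w x0 + (\<Sum>x\<in>J - {x0}. c x * w x)"
    using assms(2) by (simp add: sum.remove c'_def)
  then have "(\<Sum>x\<in>J. c' x * w x) = 0"
    using \<mu>(2) by simp
  moreover have "\<forall>x\<in>J. \<theta> (c' x) = c' x"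
    using fixed \<mu>(1) by (simp add: c'_def hom_uminus)
  ultimately have "\<forall>x\<in>J. c' x = 0"
    using assms(1) unfolding Fq_indep_def by blast
  then show "\<forall>x\<in>J - {x0}. c x = 0"
    by (metis DiffE c'_def fun_upd_other singletonI)
qed

lemma conjugate_if_linear_root:
  assumes "b \<noteq> 0" "z \<noteq> 0" "\<theta> z * a' = \<theta> b * a / b * z"
  shows "conjugate \<theta> a a'"
  unfolding conjugate_def
proof (intro exI conjI)
  show "b / z \<noteq> 0" using assms by simp
  have "a' = \<theta> b * a / b * z / \<theta> z"
    using assms by (simp add: eq_divide_eq mult_ac)
  then show "a' = \<theta> (b / z) * a * inverse (b / z)"
    by (simp add: hom_divide field_simps)
qed

lemma linear_root_same_point:
  assumes "a \<noteq> 0" "b \<noteq> 0" "\<theta> z * a = \<theta> b * a / b * z"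
  shows "\<theta> (z / b) = z / b"
proof -
  have "\<theta> z = \<theta> b * z / b"
    using assms by (simp add: divide_simps mult.commute mult.left_commute)
  then show ?thesis
    using assms(2) by (simp add: hom_divide)
qed

lemma Fq_indep_linear_eval_same_point:
  assumes "a \<noteq> 0" "Fq_indep \<theta> w J" "x0 \<in> J"
  shows "Fq_indep \<theta> (\<lambda>x. op_eval \<theta> [:- (\<theta> (w x0) * a / w x0), 1:] a (w x)) (J - {x0})"
proof (rule Fq_indep_op_eval_kernel[OF assms(2,3)])
  fix z assume "op_eval \<theta> [:- (\<theta> (w x0) * a / w x0), 1:] a z = 0"
  then have "\<theta> (z / w x0) = z / w x0"
    using linear_root_same_point[OF assms(1) Fq_indep_nonzero[OF assms(2,3)]]
    by (simp add: op_eval_linear)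
  then show "\<exists>\<mu>. \<theta> \<mu> = \<mu> \<and> z = \<mu> * w x0"
    using Fq_indep_nonzero[OF assms(2,3)] by (intro exI[of _ "z / w x0"]) simp
qed

lemma Fq_indep_linear_eval_other_point:
  assumes "b \<noteq> 0" "\<not> conjugate \<theta> a' a" "Fq_indep \<theta> w J"
  shows "Fq_indep \<theta> (\<lambda>x. op_eval \<theta> [:- (\<theta> b * a' / b), 1:] a (w x)) J"
proof (rule Fq_indep_op_eval_inj[OF assms(3)])
  fix z assume "op_eval \<theta> [:- (\<theta> b * a' / b), 1:] a z = 0"
  then show "z = 0"
    using conjugate_if_linear_root[OF assms(1), of z a a'] assms(2) by (auto simp: op_eval_linear)
qed

lemma sum_card_fun_upd_remove:
  assumes "finite I" "i0 \<in> I" "finite (J i0)" "x0 \<in> J i0"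
  shows "(\<Sum>i\<in>I. card (J i)) = Suc (\<Sum>i\<in>I. card ((J(i0 := J i0 - {x0})) i))"
proof -
  have "card (J i0) = Suc (card (J i0 - {x0}))"
    using assms(3,4) card_gt_0_iff[of "J i0"] by auto
  then show ?thesis
    using sum.remove[OF assms(1,2), of "\<lambda>i. card (J i)"]
      sum.remove[OF assms(1,2), of "\<lambda>i. card ((J(i0 := J i0 - {x0})) i)"]
    by simp
qed

lemma sum_card_roots_le_degree:
  assumes "g \<noteq> 0" "finite I"
    and nontrivial: "\<forall>i\<in>I. \<xi> i \<noteq> 0"
    and distinct: "\<forall>i\<in>I. \<forall>i'\<in>I. i \<noteq> i' \<longrightarrow> \<not> conjugate \<theta> (\<xi> i) (\<xi> i')"
    and "\<forall>i\<in>I. Fq_indep \<theta> (b i) (J i)"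
    and "\<forall>i\<in>I. \<forall>x\<in>J i. op_eval \<theta> g (\<xi> i) (b i x) = 0"
  shows "(\<Sum>i\<in>I. card (J i)) \<le> degree g"
  using assms(1,5,6)
proof (induction "degree g" arbitrary: g b J rule: less_induct)
  case less
  show ?case
  proof (cases "\<forall>i\<in>I. J i = {}")
    case True
    then show ?thesis by simp
  next
    case False
    then obtain i0 x0 where i0: "i0 \<in> I" "x0 \<in> J i0" by blast
    have indep0: "Fq_indep \<theta> (b i0) (J i0)"
      using less.prems(2) i0 by simp
    define c where "c = \<theta> (b i0 x0) * \<xi> i0 / b i0 x0"
    have "op_eval \<theta> g (\<xi> i0) (b i0 x0) = 0"
      using less.prems(3) i0 by simp
    then obtain h where g: "g = skew_mult \<theta> h [:- c, 1:]"
      unfolding c_def using Fq_indep_nonzero[OF indep0 i0(2)] by (rule skew_factor_linear)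
    then have "h \<noteq> 0" "degree g = Suc (degree h)"
      using less.prems(1) by (auto simp: degree_skew_mult)
    define J' where "J' = J(i0 := J i0 - {x0})"
    define b' where "b' = (\<lambda>i x. op_eval \<theta> [:- c, 1:] (\<xi> i) (b i x))"
    have "\<forall>i\<in>I. \<forall>x\<in>J' i. op_eval \<theta> h (\<xi> i) (b' i x) = 0"
      using less.prems(3) by (simp add: J'_def b'_def g op_eval_skew_mult)
    moreover have "\<forall>i\<in>I. Fq_indep \<theta> (b' i) (J' i)"
    proof
      fix i assume i: "i \<in> I"
      show "Fq_indep \<theta> (b' i) (J' i)"
      proof (cases "i = i0")
        case True
        then show ?thesis
          using Fq_indep_linear_eval_same_point[OF _ indep0 i0(2)] nontrivial i0(1)
          by (simp add: J'_def b'_def c_def)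
      next
        case False
        then show ?thesis
          using Fq_indep_linear_eval_other_point[OF Fq_indep_nonzero[OF indep0 i0(2)],
              of "\<xi> i0" "\<xi> i" "b i" "J i"] less.prems(2) distinct i0(1) i
          by (simp add: J'_def b'_def c_def)
      qed
    qed
    ultimately have "(\<Sum>i\<in>I. card (J' i)) \<le> degree h"
      using less.hyps \<open>h \<noteq> 0\<close> \<open>degree g = Suc (degree h)\<close> by simp
    moreover have "(\<Sum>i\<in>I. card (J i)) = Suc (\<Sum>i\<in>I. card (J' i))"
      unfolding J'_def
      using \<open>finite I\<close> i0(1) Fq_indep_imp_finite[OF indep0] i0(2) by (rule sum_card_fun_upd_remove)
    ultimately show ?thesis
      using \<open>degree g = Suc (degree h)\<close> by simp
  qed
qed

lemma degree_left_quotient_le: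
  assumes eq: "skew_mult \<theta> \<sigma> f = skew_mult \<theta> \<chi> G + skew_mult \<theta> \<sigma> R"
    and "\<sigma> \<noteq> 0" "G \<noteq> 0" "\<chi> \<noteq> 0" "n \<le> degree G"
    and f: "f = 0 \<or> degree f < k" and R: "R = 0 \<or> degree R < n"
  shows "int (degree \<chi>) \<le> int (degree \<sigma>) + int k - 1"
proof -
  have quot: "skew_mult \<theta> \<chi> G = skew_mult \<theta> \<sigma> (f - R)"
    using eq by (simp add: skew_mult_diff_right)
  have "f - R \<noteq> 0"
  proof
    assume "f - R = 0"
    with quot have "skew_mult \<theta> \<chi> G = 0" by simp
    with \<open>\<chi> \<noteq> 0\<close> \<open>G \<noteq> 0\<close> show False by simp
  qed
  have "degree \<chi> + degree G = degree \<sigma> + degree (f - R)"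
    using degree_skew_mult[OF \<open>\<chi> \<noteq> 0\<close> \<open>G \<noteq> 0\<close>] degree_skew_mult[OF \<open>\<sigma> \<noteq> 0\<close> \<open>f - R \<noteq> 0\<close>]
    by (simp only: quot)
  moreover have "degree (f - R) < max k n"
  proof (rule degree_diff_less)
    have "0 < max k n"
      using \<open>f - R \<noteq> 0\<close> f R by auto
    then show "degree f < max k n" "degree R < max k n"
      using f R by auto
  qed
  moreover have "max k n \<le> k + n" by simp
  ultimately show ?thesis
    using \<open>n \<le> degree G\<close> by linarith
qed

lemma vec_mat_Wmat:
  "vec_mat \<theta> (map u [0..<s] @ \<sigma> # map \<chi> [0..<s]) (Wmat s R G) s
     = map (\<lambda>j. skew_mult \<theta> \<sigma> (R j) + skew_mult \<theta> (\<chi> j) (G j) - u j) [0..<s]"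
  unfolding vec_mat_def
proof (rule map_cong[OF refl])
  fix j assume "j \<in> set [0..<s]"
  then have j: "j < s" by simp
  let ?r = "map u [0..<s] @ \<sigma> # map \<chi> [0..<s]"
  have "skew_mult \<theta> (?r ! i) (Wmat s R G i j)
      = (if i = j then - u j else 0) + (if i = s then skew_mult \<theta> \<sigma> (R j) else 0)
        + (if i = s + 1 + j then skew_mult \<theta> (\<chi> j) (G j) else 0)" if "i < 2 * s + 1" for i
    using that j
    by (auto simp: Wmat_def nth_append skew_mult_uminus_right[of _ 1, simplified])
  then have "(\<Sum>i<length ?r. skew_mult \<theta> (?r ! i) (Wmat s R G i j))
      = (\<Sum>i<2 * s + 1. (if i = j then - u j else 0) + (if i = s then skew_mult \<theta> \<sigma> (R j) else 0)
        + (if i = s + 1 + j then skew_mult \<theta> (\<chi> j) (G j) else 0))"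
    by (intro sum.cong) auto
  also have "\<dots> = skew_mult \<theta> \<sigma> (R j) + skew_mult \<theta> (\<chi> j) (G j) - u j"
    using j by (simp add: sum.distrib)
  finally show "(\<Sum>i<length ?r. skew_mult \<theta> (?r ! i) (Wmat s R G i j))
      = skew_mult \<theta> \<sigma> (R j) + skew_mult \<theta> (\<chi> j) (G j) - u j" .
qed

end

lemma rdeg_less_iff:
  assumes "b \<noteq> []"
  shows "rdeg v b < ereal x \<longleftrightarrow>
    (\<forall>j<length b. b ! j \<noteq> 0 \<longrightarrow> of_int (int (degree (b ! j)) + v ! j) < x)"
proof -
  define T where "T j = (if b ! j = 0 then -\<infinity> else ereal (of_int (int (degree (b ! j)) + v ! j)))"
    for j
  have "rdeg v b = Max (T ` {..<length b})"
    by (simp add: rdeg_def T_def)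
  also have "\<dots> < ereal x \<longleftrightarrow> (\<forall>t\<in>T ` {..<length b}. t < ereal x)"
    using assms by (intro Max_less_iff) auto
  finally have "rdeg v b < ereal x \<longleftrightarrow> (\<forall>j<length b. T j < ereal x)"
    by auto
  then show ?thesis
    by (auto simp: T_def)
qed

lemma all_less_add_iff: "(\<forall>j<m + (n::nat). P j) \<longleftrightarrow> (\<forall>j<m. P j) \<and> (\<forall>j<n. P (m + j))"
proof safe
  fix j assume "\<forall>j<m. P j" "\<forall>j<n. P (m + j)" "j < m + n"
  then show "P j"
    by (cases "j < m") (auto dest: spec[of _ "j - m"])
qed auto

lemma rdeg_append_less_iff:
  assumes "b \<noteq> []" "b' \<noteq> []" "length v = length b"
  shows "rdeg (v @ v') (b @ b') < ereal x \<longleftrightarrow> rdeg v b < ereal x \<and> rdeg v' b' < ereal x"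
  using assms by (simp add: rdeg_less_iff all_less_add_iff nth_append)

theorem lemma2:
  fixes \<theta> :: "'a::{field,finite} \<Rightarrow> 'a"
    and s l n k t :: nat and nn :: "nat \<Rightarrow> nat"
    and \<xi> :: "nat \<Rightarrow> 'a"
    and \<beta> c e y :: "nat \<Rightarrow> nat \<Rightarrow> nat \<Rightarrow> 'a"
    and f G R \<chi> :: "nat \<Rightarrow> 'a poly"
    and \<sigma> :: "'a poly"
    and a :: "nat \<Rightarrow> nat \<Rightarrow> 'a"
    and B :: "nat \<Rightarrow> nat \<Rightarrow> nat \<Rightarrow> nat \<Rightarrow> 'a"
  assumes aut: "field_aut \<theta>"
    and s: "s \<ge> 1"
    and xi_nontriv: "\<forall>i<l. \<xi> i \<noteq> 0"
    and xi_distinct: "\<forall>i<l. \<forall>i'<l. i \<noteq> i' \<longrightarrow> \<not> conjugate \<theta> (\<xi> i) (\<xi> i')"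
    and part: "\<forall>i<l. nn i > 0" "n = (\<Sum>i<l. nn i)"
    and beta_indep: "\<forall>j<s. \<forall>i<l. Fq_indep \<theta> (\<beta> j i) {..<nn i}"
    and f_deg: "\<forall>j<s. f j = 0 \<or> degree (f j) < k"
    and codeword: "\<forall>j<s. \<forall>i<l. \<forall>p<nn i. c j i p = op_eval \<theta> (f j) (\<xi> i) (\<beta> j i p)"
    and received: "\<forall>j<s. \<forall>i<l. \<forall>p<nn i. y j i p = c j i p + e j i p"
    and wt: "sumrank_wt \<theta> s l nn e = t"
    and t_bound: "real t \<le> real s / real (s + 1) * (real n - real k)"
    and a_indep: "\<forall>i<l. Fq_indep \<theta> (a i) {..<block_rank \<theta> s nn e i}"
    and B_Fq: "\<forall>i<l. \<forall>j<s. \<forall>r<block_rank \<theta> s nn e i. \<forall>p<nn i. \<theta> (B j i r p) = B j i r p"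
    and e_decomp: "\<forall>i<l. \<forall>j<s. \<forall>p<nn i.
        e j i p = (\<Sum>r<block_rank \<theta> s nn e i. a i r * B j i r p)"
    and B_rank: "\<forall>i<l. mat_rank_Fq \<theta> (\<lambda>r (j, p). B j i r p) (block_rank \<theta> s nn e i)
        ({..<s} \<times> {..<nn i}) = block_rank \<theta> s nn e i"
    and sigma_monic: "\<sigma> \<noteq> 0" "lead_coeff \<sigma> = 1"
    and sigma_ann: "\<forall>i<l. \<forall>r<block_rank \<theta> s nn e i. op_eval \<theta> \<sigma> (\<xi> i) (a i r) = 0"
    and sigma_min: "\<forall>g. g \<noteq> 0 \<and> (\<forall>i<l. \<forall>r<block_rank \<theta> s nn e i. op_eval \<theta> g (\<xi> i) (a i r) = 0)
        \<longrightarrow> degree \<sigma> \<le> degree g"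
    and G_monic: "\<forall>j<s. G j \<noteq> 0 \<and> lead_coeff (G j) = 1"
    and G_ann: "\<forall>j<s. \<forall>i<l. \<forall>p<nn i. op_eval \<theta> (G j) (\<xi> i) (\<beta> j i p) = 0"
    and G_min: "\<forall>j<s. \<forall>g. g \<noteq> 0 \<and> (\<forall>i<l. \<forall>p<nn i. op_eval \<theta> g (\<xi> i) (\<beta> j i p) = 0)
        \<longrightarrow> degree (G j) \<le> degree g"
    and R_deg: "\<forall>j<s. R j = 0 \<or> degree (R j) < n"
    and R_int: "\<forall>j<s. \<forall>i<l. \<forall>p<nn i. op_eval \<theta> (R j) (\<xi> i) (\<beta> j i p) = y j i p"
    and chi_def: "\<forall>j<s. skew_mult \<theta> \<sigma> (f j) = skew_mult \<theta> (\<chi> j) (G j) + skew_mult \<theta> \<sigma> (R j)"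
  shows
    "let \<rho> = map (\<lambda>j. skew_mult \<theta> \<sigma> (f j)) [0..<s] @ [\<sigma>];
         \<chi>s = map \<chi> [0..<s];
         W = Wmat s R G;
         w = replicate s 0 @ [int k - 1];
         v = replicate s 0 @ [int k - 1] @ replicate s 0;
         D = real s / real (s + 1) * (real n - real k);
         d = D + real n
     in (vec_mat \<theta> (\<rho> @ \<chi>s) W s = replicate s 0 \<and> rdeg w \<rho> < ereal D)
        \<longleftrightarrow> ((\<forall>p\<in>set (vec_mat \<theta> (\<rho> @ \<chi>s) W s). mod_r_zero \<theta> p (nat \<lceil>d\<rceil>))
             \<and> rdeg v (\<rho> @ \<chi>s) < ereal D)"
proof -
  interpret field_automorphism \<theta>
    by (rule field_automorphism.intro[OF aut])
  define D where "D = real s / real (s + 1) * (real n - real k)"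
  let ?\<rho> = "map (\<lambda>j. skew_mult \<theta> \<sigma> (f j)) [0..<s] @ [\<sigma>]"
  let ?\<chi>s = "map \<chi> [0..<s]"
  let ?w = "replicate s 0 @ [int k - 1]"
  have product: "vec_mat \<theta> (?\<rho> @ ?\<chi>s) (Wmat s R G) s = replicate s 0"
    using vec_mat_Wmat[of "\<lambda>j. skew_mult \<theta> \<sigma> (f j)" s \<sigma> \<chi> R G] chi_def
    by (simp add: list_eq_iff_nth_eq)
  have "n \<le> degree (G j)" if "j < s" for j
    using sum_card_roots_le_degree[of "G j" "{..<l}" \<xi> "\<beta> j" "\<lambda>i. {..<nn i}"]
      that xi_nontriv xi_distinct beta_indep G_ann G_monic part(2) by simp
  then have \<chi>_deg: "int (degree (\<chi> j)) \<le> int (degree \<sigma>) + int k - 1" if "j < s" "\<chi> j \<noteq> 0" for j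
    using degree_left_quotient_le[of \<sigma> "f j" "\<chi> j" "G j" "R j" n k] that
      chi_def sigma_monic G_monic f_deg R_deg by simp
  have "rdeg (replicate s 0) ?\<chi>s < ereal D" if "rdeg ?w ?\<rho> < ereal D"
  proof -
    have "\<forall>j<length ?\<rho>. ?\<rho> ! j \<noteq> 0 \<longrightarrow> of_int (int (degree (?\<rho> ! j)) + ?w ! j) < D"
      using that rdeg_less_iff[of ?\<rho> ?w D] by blast
    then have "of_int (int (degree \<sigma>) + int k - 1) < D"
      using sigma_monic(1) by (auto dest: spec[of _ s] simp: nth_append)
    then show ?thesis
      using \<chi>_deg s by (force simp: rdeg_less_iff)
  qed
  moreover have "rdeg (?w @ replicate s 0) (?\<rho> @ ?\<chi>s) < ereal D
      \<longleftrightarrow> rdeg ?w ?\<rho> < ereal D \<and> rdeg (replicate s 0) ?\<chi>s < ereal D"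
    using s by (intro rdeg_append_less_iff) auto
  moreover have "mod_r_zero \<theta> 0 N" for N
    unfolding mod_r_zero_def by (metis skew_mult_0_left)
  ultimately show ?thesis
    using product unfolding Let_def D_def[symmetric] by auto
qed

end
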